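(* $\mathscr{F}_4\supseteq\mathscr{F}_{\mathrm{AIFV}}$.
   Context: $\mathcal{S}$ is a finite source alphabet with $|\mathcal{S}|\ge 2$ and $\mathcal{C}=\{0,1\}$; $\mathcal{A}^k,\mathcal{A}^{\ast},\mathcal{A}^{+}$ are sequences of length $k$, finite, positive finite length; $\lambda$ empty sequence; $\preceq$ prefix, $\prec$ proper prefix; $\mathrm{suff}(x_1\cdots x_n)=x_2\cdots x_n$. A code-tuple $F$ with $m\ge1$ code tables consists of maps $f_i:\mathcal{S}\to\mathcal{C}^{\ast}$ and $\tau_i:\mathcal{S}\to\{0,\dots,m-1\}$, $i\in[F]=\{0,\dots,m-1\}$; $|F|=m$. $f_i^{\ast}(\lambda)=\lambda$, $f_i^{\ast}(\pmb{x})=f_i(x_1)f^{\ast}_{\tau_i(x_1)}(\mathrm{suff}(\pmb{x}))$. For integer $k\ge0$, $\pmb{b}\in\mathcal{C}^{\ast}$: $\mathcal{P}^k_{F,i}(\pmb{b})$ is the set of $\pmb{c}\in\mathcal{C}^k$ such that some $\pmb{x}=x_1\cdots x_n\in\mathcal{S}^{+}$ has $f_i^{\ast}(\pmb{x})\succeq\pmb{b}\pmb{c}$ and $f_i(x_1)\succeq\pmb{b}$; $\bar{\mathcal{P}}^k_{F,i}(\pmb{b})$ the same with $f_i(x_1)\succ\pmb{b}$; $\mathcal{P}^k_{F,i}=\mathcal{P}^k_{F,i}(\lambda)$. $F$ is $2$-bit delay decodable ($F\in\mathscr{F}_{2\text{-}\mathrm{dec}}$) if $\mathcal{P}^2_{F,\tau_i(s)}\cap\bar{\mathcal{P}}^2_{F,i}(f_i(s))=\emptyset$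 for all $i,s$, and $\mathcal{P}^2_{F,\tau_i(s)}\cap\mathcal{P}^2_{F,\tau_i(s')}=\emptyset$ whenever $s\ne s'$, $f_i(s)=f_i(s')$. Fix $\mu:\mathcal{S}\to(0,1]$ with $\sum_s\mu(s)=1$; $Q(F)$ is the $|F|\times|F|$ matrix with $Q_{i,j}(F)=\sum_{s:\tau_i(s)=j}\mu(s)$; $F$ is regular ($F\in\mathscr{F}_{\mathrm{reg}}$) if $\pmb{\pi}Q(F)=\pmb{\pi}$, $\sum_i\pi_i=1$ has a unique solution. $\mathscr{F}_4$ is the set of $F\in\mathscr{F}_{\mathrm{reg}}\cap\mathscr{F}_{2\text{-}\mathrm{dec}}$ with $|F|=2$, $\mathcal{P}^2_{F,0}=\{00,01,10,11\}$ and $\mathcal{P}^2_{F,1}=\{01,10,11\}$. $\mathscr{F}_{\mathrm{AIFV}}$ is the set of code-tuples $F$ with $|F|=2$ satisfying: (i) $f_0,f_1$ injective; (ii) for all $i\in\{0,1\}$, $s$: $1\notin\bar{\mathcal{P}}^1_{F,i}(f_i(s))$ and $1\notin\bar{\mathcal{P}}^1_{F,i}(f_i(s)0)$; (iii) $f_i(s')\ne f_i(s)0$ for all $i,s,s'$; (iv) $\tau_i(s)=0$ if $\bar{\mathcal{P}}^0_{F,i}(f_i(s))=\emptyset$, and $\tau_i(s)=1$ otherwise; (v) $f_1(s)\ne\lambda$ and $f_1(s)\ne0$ for all $s$; (vi) $0\notin\bar{\mathcal{P}}^1_{F,1}(0)$; (vii) for all $i\in\{0,1\}$, $\pmb{b}\in\mathcal{C}^{\ast}$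 with $|\bar{\mathcal{P}}^1_{F,i}(\pmb{b})|=1$: either $f_i(s)\pmb{c}=\pmb{b}$ for some $s\in\mathcal{S}$, $\pmb{c}\in\mathcal{C}^0\cup\mathcal{C}^1$, or $(i,\pmb{b})=(1,0)$. *)

theory Defs
  imports Complex_Main "HOL-Library.Sublist"
begin

text \<open>Code alphabet C = {0,1} is represented by bool: False = 0, True = 1.
  A code-tuple F with m tables is given by m, f :: nat => 'a => bool list and
  tau :: nat => 'a => nat; only the tables i < m are meaningful.\<close>

definition code_tuple :: "nat \<Rightarrow> (nat \<Rightarrow> 'a \<Rightarrow> bool list) \<Rightarrow> (nat \<Rightarrow> 'a \<Rightarrow> nat) \<Rightarrow> bool" where
  "code_tuple m f \<tau> \<longleftrightarrow> m \<ge> 1 \<and> (\<forall>i<m. \<forall>s. \<tau> i s < m)"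

fun fstar :: "(nat \<Rightarrow> 'a \<Rightarrow> bool list) \<Rightarrow> (nat \<Rightarrow> 'a \<Rightarrow> nat) \<Rightarrow> nat \<Rightarrow> 'a list \<Rightarrow> bool list" where
  "fstar f \<tau> i [] = []"
| "fstar f \<tau> i (x # xs) = f i x @ fstar f \<tau> (\<tau> i x) xs"

definition Pset :: "(nat \<Rightarrow> 'a \<Rightarrow> bool list) \<Rightarrow> (nat \<Rightarrow> 'a \<Rightarrow> nat) \<Rightarrow> nat \<Rightarrow> nat \<Rightarrow> bool list \<Rightarrow> bool list set" where
  "Pset f \<tau> k i b = {c. length c = k \<and> (\<exists>x. x \<noteq> [] \<and> prefix (b @ c) (fstar f \<tau> i x) \<and> prefix b (f i (hd x)))}"

definition Pbar :: "(nat \<Rightarrow> 'a \<Rightarrow> bool list) \<Rightarrow> (nat \<Rightarrow> 'a \<Rightarrow> nat) \<Rightarrow> nat \<Rightarrow> nat \<Rightarrow> bool list \<Rightarrow> bool list set" where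
  "Pbar f \<tau> k i b = {c. length c = k \<and> (\<exists>x. x \<noteq> [] \<and> prefix (b @ c) (fstar f \<tau> i x) \<and> strict_prefix b (f i (hd x)))}"

definition two_bit_delay_dec :: "nat \<Rightarrow> (nat \<Rightarrow> 'a \<Rightarrow> bool list) \<Rightarrow> (nat \<Rightarrow> 'a \<Rightarrow> nat) \<Rightarrow> bool" where
  "two_bit_delay_dec m f \<tau> \<longleftrightarrow>
     (\<forall>i<m. \<forall>s. Pset f \<tau> 2 (\<tau> i s) [] \<inter> Pbar f \<tau> 2 i (f i s) = {}) \<and>
     (\<forall>i<m. \<forall>s s'. s \<noteq> s' \<and> f i s = f i s' \<longrightarrow> Pset f \<tau> 2 (\<tau> i s) [] \<inter> Pset f \<tau> 2 (\<tau> i s') [] = {})"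

definition Qmat :: "('a::finite \<Rightarrow> real) \<Rightarrow> (nat \<Rightarrow> 'a \<Rightarrow> nat) \<Rightarrow> nat \<Rightarrow> nat \<Rightarrow> real" where
  "Qmat \<mu> \<tau> i j = (\<Sum>s\<in>{s. \<tau> i s = j}. \<mu> s)"

text \<open>Regularity: pi Q = pi, sum pi = 1 has a unique solution pi in R^m
  (vectors in R^m represented as functions nat => real vanishing outside {0..<m}).\<close>
definition regular :: "('a::finite \<Rightarrow> real) \<Rightarrow> nat \<Rightarrow> (nat \<Rightarrow> 'a \<Rightarrow> nat) \<Rightarrow> bool" where
  "regular \<mu> m \<tau> \<longleftrightarrow> (\<exists>!\<pi>::nat \<Rightarrow> real. (\<forall>i\<ge>m. \<pi> i = 0) \<and>
      (\<forall>j<m. (\<Sum>i<m. \<pi> i * Qmat \<mu> \<tau> i j) = \<pi> j) \<and> (\<Sum>i<m. \<pi> i) = 1)"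

definition in_F4 :: "('a::finite \<Rightarrow> real) \<Rightarrow> nat \<Rightarrow> (nat \<Rightarrow> 'a \<Rightarrow> bool list) \<Rightarrow> (nat \<Rightarrow> 'a \<Rightarrow> nat) \<Rightarrow> bool" where
  "in_F4 \<mu> m f \<tau> \<longleftrightarrow> code_tuple m f \<tau> \<and> regular \<mu> m \<tau> \<and> two_bit_delay_dec m f \<tau> \<and> m = 2 \<and>
     Pset f \<tau> 2 0 [] = {[False,False],[False,True],[True,False],[True,True]} \<and>
     Pset f \<tau> 2 1 [] = {[False,True],[True,False],[True,True]}"

definition in_AIFV :: "nat \<Rightarrow> (nat \<Rightarrow> 'a \<Rightarrow> bool list) \<Rightarrow> (nat \<Rightarrow> 'a \<Rightarrow> nat) \<Rightarrow> bool" where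
  "in_AIFV m f \<tau> \<longleftrightarrow> code_tuple m f \<tau> \<and> m = 2 \<and>
     inj (f 0) \<and> inj (f 1) \<and>
     (\<forall>i<2. \<forall>s. [True] \<notin> Pbar f \<tau> 1 i (f i s) \<and> [True] \<notin> Pbar f \<tau> 1 i (f i s @ [False])) \<and>
     (\<forall>i<2. \<forall>s s'. f i s' \<noteq> f i s @ [False]) \<and>
     (\<forall>i<2. \<forall>s. \<tau> i s = (if Pbar f \<tau> 0 i (f i s) = {} then 0 else 1)) \<and>
     (\<forall>s. f 1 s \<noteq> [] \<and> f 1 s \<noteq> [False]) \<and>
     [False] \<notin> Pbar f \<tau> 1 1 [False] \<and>
     (\<forall>i<2. \<forall>b. card (Pbar f \<tau> 1 i b) = 1 \<longrightarrow>
        (\<exists>s c. length c \<le> 1 \<and> f i s @ c = b) \<or> (i = 1 \<and> b = [False]))"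

end

theory Submission
  imports Defs
begin

(*
  Read each table of an AIFV code-tuple as a binary code tree.  Conditions (ii) and (iii)
  force a codeword that is a proper prefix of another codeword to be followed by 00 inside
  the tree, and by (iv) exactly these codewords switch to table 1.  Table 1 contains neither
  the empty word, nor 0, nor a word starting with 00, whereas condition (vii) makes the trees
  complete enough that every other two-bit start is produced (possibly across a codeword
  boundary).  Hence table 1 produces exactly the starts 01, 10, 11 and table 0 all four; after
  a codeword that leads to table 1, reading 00 means the codeword was not finished and any
  other start means it was, which is 2-bit delay decodability.  Finally a longest codeword of
  table 1 leads back to table 0, so the two-state transition matrix has a unique stationary
  distribution.
*)

lemma mem_Pset_Nil_iff:
  "c \<in> Pset f \<tau> k i [] \<longleftrightarrow> length c = k \<and> (\<exists>x. x \<noteq> [] \<and> prefix c (fstar f \<tau> i x))"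
  unfolding Pset_def by auto

lemma Pset_Nil_mono_empty_codeword:
  assumes "f i s = []"
  shows "Pset f \<tau> k (\<tau> i s) [] \<subseteq> Pset f \<tau> k i []"
proof
  fix c assume "c \<in> Pset f \<tau> k (\<tau> i s) []"
  then obtain x where "length c = k" "x \<noteq> []" "prefix c (fstar f \<tau> (\<tau> i s) x)"
    unfolding mem_Pset_Nil_iff by blast
  then show "c \<in> Pset f \<tau> k i []"
    unfolding mem_Pset_Nil_iff using assms by (intro conjI exI[of _ "s # x"]) auto
qed

lemma Pset_2_subset:
  "Pset f \<tau> 2 i b \<subseteq> {[False, False], [False, True], [True, False], [True, True]}"
proof
  fix c assume "c \<in> Pset f \<tau> 2 i b"
  then have "length c = 2" unfolding Pset_def by blast
  then obtain c\<^sub>1 c\<^sub>2 where "c = [c\<^sub>1, c\<^sub>2]" by (cases c; cases "tl c") auto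
  then show "c \<in> {[False, False], [False, True], [True, False], [True, True]}"
    by (cases c\<^sub>1; cases c\<^sub>2) auto
qed

lemma mem_Pbar_1_iff:
  "c \<in> Pbar f \<tau> 1 i b \<longleftrightarrow> (\<exists>a. c = [a] \<and> (\<exists>s. prefix (b @ [a]) (f i s)))"
proof
  assume "c \<in> Pbar f \<tau> 1 i b"
  then obtain x where x: "length c = 1" "x \<noteq> []" "prefix (b @ c) (fstar f \<tau> i x)"
    "strict_prefix b (f i (hd x))" unfolding Pbar_def by auto
  then obtain s xs where x_eq: "x = s # xs" by (cases x) auto
  obtain a where c: "c = [a]" using x(1) by (cases c) auto
  have "prefix (b @ [a]) (f i s @ fstar f \<tau> (\<tau> i s) xs)"
    using x(3) x_eq c by simp
  moreover have "length (b @ [a]) \<le> length (f i s)"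
    using prefix_length_less[OF x(4)] x_eq by simp
  ultimately have "prefix (b @ [a]) (f i s)"
    using prefix_length_prefix[of "b @ [a]" _ "f i s"] by simp
  then show "\<exists>a. c = [a] \<and> (\<exists>s. prefix (b @ [a]) (f i s))" using c by blast
next
  assume "\<exists>a. c = [a] \<and> (\<exists>s. prefix (b @ [a]) (f i s))"
  then obtain a s where c: "c = [a]" and "prefix (b @ [a]) (f i s)" by blast
  moreover have "strict_prefix b (b @ [a])" by (simp add: strict_prefix_def)
  ultimately have "strict_prefix b (f i s)" using prefix_order.less_le_trans by blast
  then show "c \<in> Pbar f \<tau> 1 i b"
    unfolding Pbar_def using c \<open>prefix (b @ [a]) (f i s)\<close>
    by (intro CollectI conjI exI[of _ "[s]"]) auto
qed

lemma Pbar_0_empty_iff: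
  "Pbar f \<tau> 0 i b = {} \<longleftrightarrow> (\<nexists>s. strict_prefix b (f i s))"
proof
  assume empty: "Pbar f \<tau> 0 i b = {}"
  show "\<nexists>s. strict_prefix b (f i s)"
  proof
    assume "\<exists>s. strict_prefix b (f i s)"
    then obtain s where "strict_prefix b (f i s)" by blast
    then have "[] \<in> Pbar f \<tau> 0 i b" unfolding Pbar_def by (auto intro!: exI[of _ "[s]"])
    with empty show False by simp
  qed
next
  assume "\<nexists>s. strict_prefix b (f i s)"
  then show "Pbar f \<tau> 0 i b = {}" unfolding Pbar_def by auto
qed

lemma stationary_two_state_iff:
  fixes p0 p1 q01 q10 :: real
  assumes "q01 + q10 \<noteq> 0"
  shows "(p0 * (1 - q01) + p1 * q10 = p0 \<and> p0 * q01 + p1 * (1 - q10) = p1 \<and> p0 + p1 = 1)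
    \<longleftrightarrow> p0 = q10 / (q01 + q10) \<and> p1 = q01 / (q01 + q10)"
proof
  assume stationary: "p0 * (1 - q01) + p1 * q10 = p0 \<and> p0 * q01 + p1 * (1 - q10) = p1 \<and> p0 + p1 = 1"
  then have p1: "p1 = 1 - p0" by simp
  with stationary have p0_sum: "p0 * (q01 + q10) = q10" by (simp add: algebra_simps)
  have "p1 * (q01 + q10) = q01" unfolding p1 by (simp add: left_diff_distrib p0_sum)
  with p0_sum assms show "p0 = q10 / (q01 + q10) \<and> p1 = q01 / (q01 + q10)"
    by (auto simp: field_simps)
next
  assume "p0 = q10 / (q01 + q10) \<and> p1 = q01 / (q01 + q10)"
  then have p0: "p0 = q10 / (q01 + q10)" and p1: "p1 = q01 / (q01 + q10)" by auto
  from assms show "p0 * (1 - q01) + p1 * q10 = p0 \<and> p0 * q01 + p1 * (1 - q10) = p1 \<and> p0 + p1 = 1"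
    unfolding p0 p1 by (simp add: add_divide_distrib[symmetric] algebra_simps)
qed

lemma Qmat_row_sum:
  fixes \<mu> :: "'a::finite \<Rightarrow> real"
  assumes "\<forall>s. \<tau> i s < m"
  shows "(\<Sum>j<m. Qmat \<mu> \<tau> i j) = (\<Sum>s\<in>UNIV. \<mu> s)"
  unfolding Qmat_def using sum.group[of UNIV "{..<m}" "\<tau> i" \<mu>] assms by auto

lemma regular_two_tablesI:
  fixes \<mu> :: "'a::finite \<Rightarrow> real"
  assumes rows: "\<And>i. i < 2 \<Longrightarrow> Qmat \<mu> \<tau> i 0 + Qmat \<mu> \<tau> i 1 = 1"
    and flow: "Qmat \<mu> \<tau> 0 1 + Qmat \<mu> \<tau> 1 0 \<noteq> 0"
  shows "regular \<mu> 2 \<tau>"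
proof -
  define a b where "a = Qmat \<mu> \<tau> 0 1" and "b = Qmat \<mu> \<tau> 1 0"
  have Q: "Qmat \<mu> \<tau> 0 0 = 1 - a" "Qmat \<mu> \<tau> 1 1 = 1 - b" "Qmat \<mu> \<tau> 0 1 = a" "Qmat \<mu> \<tau> 1 0 = b"
    using rows[of 0] rows[of 1] unfolding a_def b_def by auto
  have sum_2: "(\<Sum>i<2. g i) = g 0 + g 1" for g :: "nat \<Rightarrow> real"
    by (simp add: numeral_2_eq_2)
  have all_2: "(\<forall>j<2. P j) \<longleftrightarrow> P 0 \<and> P 1" for P :: "nat \<Rightarrow> bool"
    by (auto simp: less_2_cases_iff)
  have stationary: "(\<forall>j<2. (\<Sum>i<2. \<pi> i * Qmat \<mu> \<tau> i j) = \<pi> j) \<and> (\<Sum>i<2. \<pi> i) = 1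
      \<longleftrightarrow> \<pi> 0 = b / (a + b) \<and> \<pi> 1 = a / (a + b)" for \<pi> :: "nat \<Rightarrow> real"
    using stationary_two_state_iff[of a b "\<pi> 0" "\<pi> 1"] flow
    unfolding sum_2 all_2 Q by blast
  let ?p = "\<lambda>i::nat. if i = 0 then b / (a + b) else if i = 1 then a / (a + b) else 0"
  show ?thesis
    unfolding regular_def
  proof (rule ex1I[of _ ?p])
    show "(\<forall>i\<ge>2. ?p i = 0) \<and> (\<forall>j<2. (\<Sum>i<2. ?p i * Qmat \<mu> \<tau> i j) = ?p j) \<and> (\<Sum>i<2. ?p i) = 1"
    proof (rule conjI)
      show "\<forall>i\<ge>2. ?p i = 0" by simp
      show "(\<forall>j<2. (\<Sum>i<2. ?p i * Qmat \<mu> \<tau> i j) = ?p j) \<and> (\<Sum>i<2. ?p i) = 1"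
        unfolding stationary by simp
    qed
  next
    fix \<pi> :: "nat \<Rightarrow> real"
    assume "(\<forall>i\<ge>2. \<pi> i = 0) \<and> (\<forall>j<2. (\<Sum>i<2. \<pi> i * Qmat \<mu> \<tau> i j) = \<pi> j) \<and> (\<Sum>i<2. \<pi> i) = 1"
    then show "\<pi> = ?p"
      using stationary[of \<pi>] by (auto simp: fun_eq_iff not_less_eq[symmetric] numeral_2_eq_2)
  qed
qed

lemma regular_two_tables_if_return:
  fixes \<mu> :: "'a::finite \<Rightarrow> real"
  assumes pos: "\<forall>s. 0 < \<mu> s" and total: "(\<Sum>s\<in>UNIV. \<mu> s) = 1"
    and tables: "\<forall>i<2. \<forall>s. \<tau> i s < 2" and return: "\<tau> 1 s\<^sub>0 = 0"
  shows "regular \<mu> 2 \<tau>"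
proof (rule regular_two_tablesI)
  fix i :: nat assume "i < 2"
  then show "Qmat \<mu> \<tau> i 0 + Qmat \<mu> \<tau> i 1 = 1"
    using Qmat_row_sum[of \<tau> i 2 \<mu>] tables total by (simp add: numeral_2_eq_2)
next
  have "0 \<le> Qmat \<mu> \<tau> 0 1"
    unfolding Qmat_def using pos by (simp add: sum_nonneg less_imp_le)
  moreover have "\<mu> s\<^sub>0 \<le> Qmat \<mu> \<tau> 1 0"
    unfolding Qmat_def using pos return by (intro member_le_sum) (auto simp: less_imp_le)
  ultimately show "Qmat \<mu> \<tau> 0 1 + Qmat \<mu> \<tau> 1 0 \<noteq> 0"
    using pos[rule_format, of s\<^sub>0] by linarith
qed

locale aifv_code =
  fixes f :: "nat \<Rightarrow> 'a::finite \<Rightarrow> bool list" and \<tau> :: "nat \<Rightarrow> 'a \<Rightarrow> nat"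
  assumes aifv: "in_AIFV 2 f \<tau>"
    and two_symbols: "2 \<le> card (UNIV :: 'a set)"
begin

lemma code_tuple: "code_tuple 2 f \<tau>"
  using aifv unfolding in_AIFV_def by blast

lemma tau_less_2: "i < 2 \<Longrightarrow> \<tau> i s < 2"
  using code_tuple unfolding code_tuple_def by blast

lemma inj_table:
  assumes "i < 2" shows "inj (f i)"
proof -
  have "inj (f 0)" "inj (f 1)" using aifv unfolding in_AIFV_def by blast+
  with assms show ?thesis by (auto simp: less_2_cases_iff)
qed

lemma not_prefix_codeword_True:
  assumes "i < 2" shows "\<not> prefix (f i s @ [True]) (f i s')"
proof -
  have "[True] \<notin> Pbar f \<tau> 1 i (f i s)" using aifv assms unfolding in_AIFV_def by blast
  then show ?thesis unfolding mem_Pbar_1_iff by auto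
qed

lemma not_prefix_codeword_False_True:
  assumes "i < 2" shows "\<not> prefix (f i s @ [False, True]) (f i s')"
proof -
  have "[True] \<notin> Pbar f \<tau> 1 i (f i s @ [False])" using aifv assms unfolding in_AIFV_def by blast
  then show ?thesis unfolding mem_Pbar_1_iff by auto
qed

lemma codeword_append_False_not_codeword: "i < 2 \<Longrightarrow> f i s' \<noteq> f i s @ [False]"
  using aifv unfolding in_AIFV_def by blast

lemma tau_eq:
  assumes "i < 2" shows "\<tau> i s = (if \<exists>s'. strict_prefix (f i s) (f i s') then 1 else 0)"
proof -
  have "\<tau> i s = (if Pbar f \<tau> 0 i (f i s) = {} then 0 else 1)"
    using aifv assms unfolding in_AIFV_def by blast
  then show ?thesis by (simp add: Pbar_0_empty_iff)
qed

lemma table1_not_Nil: "f 1 s \<noteq> []"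
  and table1_not_False: "f 1 s \<noteq> [False]"
  using aifv unfolding in_AIFV_def by blast+

lemma table1_not_prefix_False_False: "\<not> prefix [False, False] (f 1 s)"
proof -
  have "[False] \<notin> Pbar f \<tau> 1 1 [False]" using aifv unfolding in_AIFV_def by blast
  then show ?thesis unfolding mem_Pbar_1_iff by auto
qed

(* Condition (vii): in the code tree, a node with only one child is a codeword, a child of a
   codeword, or the node 0 of table 1. *)
lemma sibling_or_codeword:
  assumes i: "i < 2" and "prefix (b @ [a]) (f i s)"
  shows "(\<exists>s'. prefix (b @ [\<not> a]) (f i s')) \<or> (\<exists>s' c. length c \<le> 1 \<and> f i s' @ c = b)
    \<or> (i = 1 \<and> b = [False])"
proof (cases "\<exists>s'. prefix (b @ [\<not> a]) (f i s')")
  case no_sibling: False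
  have only_a: "a' = a" if "prefix (b @ [a']) (f i s')" for a' s'
  proof (rule ccontr)
    assume "a' \<noteq> a"
    then have "a' = (\<not> a)" by blast
    with that no_sibling show False by blast
  qed
  have "Pbar f \<tau> 1 i b = {[a]}"
    unfolding set_eq_iff mem_Pbar_1_iff using assms(2) only_a by blast
  moreover have "\<forall>b. card (Pbar f \<tau> 1 i b) = 1 \<longrightarrow>
      (\<exists>s' c. length c \<le> 1 \<and> f i s' @ c = b) \<or> (i = 1 \<and> b = [False])"
    using aifv i unfolding in_AIFV_def by blast
  ultimately show ?thesis by simp
qed simp

lemma strict_prefix_codeword_extends_False_False:
  assumes i: "i < 2" and "strict_prefix (f i s) (f i s')"
  shows "prefix (f i s @ [False, False]) (f i s')"
proof -
  obtain a d where d: "f i s' = f i s @ a # d"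
    using assms(2) by (rule strict_prefixE')
  have "a = False"
    using not_prefix_codeword_True[OF i, of s s'] d by (cases a) auto
  moreover have "d \<noteq> []"
    using codeword_append_False_not_codeword[OF i, of s' s] d \<open>a = False\<close> by auto
  then obtain a' d' where "d = a' # d'" by (cases d) auto
  moreover have "a' = False"
    using not_prefix_codeword_False_True[OF i, of s s'] d \<open>a = False\<close> \<open>d = a' # d'\<close>
    by (cases a') auto
  ultimately show ?thesis using d by simp
qed

lemma first_bit_occurs:
  assumes i: "i < 2" and nonempty: "\<forall>s. f i s \<noteq> []"
  shows "\<exists>s. prefix [a] (f i s)"
proof -
  obtain s\<^sub>0 :: 'a where True by blast
  obtain a\<^sub>0 r where s\<^sub>0: "f i s\<^sub>0 = a\<^sub>0 # r" using nonempty by (cases "f i s\<^sub>0") auto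
  then have "prefix ([] @ [a\<^sub>0]) (f i s\<^sub>0)" by simp
  from sibling_or_codeword[OF i this] nonempty obtain s\<^sub>1 where "prefix [\<not> a\<^sub>0] (f i s\<^sub>1)"
    by auto
  with s\<^sub>0 show ?thesis by (cases "a = a\<^sub>0") (auto intro: exI[of _ s\<^sub>0] exI[of _ s\<^sub>1])
qed

lemma table0_not_all_Nil: "\<exists>s. f 0 s \<noteq> []"
proof -
  have "\<not> card (UNIV :: 'a set) \<le> Suc 0" using two_symbols by simp
  then obtain s s' :: 'a where "s \<noteq> s'" by (auto simp: card_le_Suc0_iff_eq)
  then have "f 0 s \<noteq> f 0 s'" using inj_table[of 0] by (simp add: inj_eq)
  then show ?thesis by metis
qed

lemma empty_codeword_switches:
  assumes "f 0 s = []" shows "\<tau> 0 s = 1"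
proof -
  obtain s' where "f 0 s' \<noteq> []" using table0_not_all_Nil by blast
  with assms have "strict_prefix (f 0 s) (f 0 s')" by (simp add: strict_prefix_def)
  then show ?thesis using tau_eq[of 0 s] by auto
qed

lemma first_bit_reachable:
  assumes "j < 2" shows "\<exists>x. x \<noteq> [] \<and> prefix [a] (fstar f \<tau> j x)"
proof -
  have from_codeword: "\<exists>x. x \<noteq> [] \<and> prefix [a] (fstar f \<tau> j x)" if "prefix [a] (f j s)" for j s
    using that by (intro exI[of _ "[s]"]) simp
  have table1: "\<exists>x. x \<noteq> [] \<and> prefix [a] (fstar f \<tau> 1 x)"
    using first_bit_occurs[of 1 a] table1_not_Nil from_codeword by auto
  show ?thesis
  proof (cases "j = 0 \<and> (\<exists>s. f 0 s = [])")
    case True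
    then obtain s where s: "j = 0" "f 0 s = []" by blast
    from table1 obtain x where "x \<noteq> []" "prefix [a] (fstar f \<tau> 1 x)" by blast
    then show ?thesis
      using s empty_codeword_switches[OF s(2)] by (intro exI[of _ "s # x"]) simp
  next
    case False
    with assms have "j = 1 \<or> (j = 0 \<and> (\<forall>s. f 0 s \<noteq> []))" by auto
    then show ?thesis using table1 first_bit_occurs[of 0 a] from_codeword by auto
  qed
qed

lemma codeword_extension_reachable:
  assumes "i < 2" shows "\<exists>x. x \<noteq> [] \<and> prefix (f i s @ [a]) (fstar f \<tau> i x)"
proof -
  obtain x where "x \<noteq> []" "prefix [a] (fstar f \<tau> (\<tau> i s) x)"
    using first_bit_reachable tau_less_2[OF assms] by blast
  then show ?thesis by (intro exI[of _ "s # x"]) simp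
qed

lemma two_bit_start_in_Pset:
  assumes i: "i < 2" and nonempty: "\<forall>s. f i s \<noteq> []" and "\<not> (i = 1 \<and> a\<^sub>1 = False)"
  shows "[a\<^sub>1, a\<^sub>2] \<in> Pset f \<tau> 2 i []"
proof -
  have from_codeword: "[a\<^sub>1, a\<^sub>2] \<in> Pset f \<tau> 2 i []" if "prefix [a\<^sub>1, a\<^sub>2] (f i s)" for s
    using that unfolding mem_Pset_Nil_iff by (intro conjI exI[of _ "[s]"]) auto
  have from_short_codeword: "[a\<^sub>1, a\<^sub>2] \<in> Pset f \<tau> 2 i []" if "f i s = [a\<^sub>1]" for s
    using codeword_extension_reachable[OF i, of s a\<^sub>2] that unfolding mem_Pset_Nil_iff by auto
  obtain s where "prefix [a\<^sub>1] (f i s)" using first_bit_occurs[OF i nonempty] by blast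
  then consider "f i s = [a\<^sub>1]" | a' r where "f i s = a\<^sub>1 # a' # r"
    by (cases "f i s"; cases "tl (f i s)") auto
  then show ?thesis
  proof cases
    case 1
    then show ?thesis by (rule from_short_codeword)
  next
    case (2 a' r)
    then have "prefix ([a\<^sub>1] @ [a']) (f i s)" by simp
    from sibling_or_codeword[OF i this] assms(3)
    consider s' where "prefix [a\<^sub>1, \<not> a'] (f i s')" | s' c where "length c \<le> 1" "f i s' @ c = [a\<^sub>1]"
      by auto
    then show ?thesis
    proof cases
      case (1 s')
      show ?thesis
      proof (cases "a\<^sub>2 = a'")
        case True
        with 2 show ?thesis by (intro from_codeword[of s]) simp
      next
        case False
        with 1 show ?thesis by (intro from_codeword[of s']) (cases a', auto)
      qed
    next
      case (2 s' c)
      with nonempty have "f i s' = [a\<^sub>1]" by (cases c) (auto simp: append_eq_Cons_conv)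
      then show ?thesis by (rule from_short_codeword)
    qed
  qed
qed

lemma table1_False_True:
  assumes "prefix [False] (f 1 s)" shows "\<exists>r. f 1 s = False # True # r"
proof -
  obtain r where r: "f 1 s = False # r" using assms by (auto simp: prefix_def)
  with table1_not_False obtain b r' where "r = b # r'" by (cases r) auto
  with r table1_not_prefix_False_False[of s] show ?thesis by (cases b) auto
qed

lemma Pset_table1: "Pset f \<tau> 2 1 [] = {[False, True], [True, False], [True, True]}"
proof
  show "Pset f \<tau> 2 1 [] \<subseteq> {[False, True], [True, False], [True, True]}"
  proof
    fix c assume c: "c \<in> Pset f \<tau> 2 1 []"
    then obtain x where "x \<noteq> []" "prefix c (fstar f \<tau> 1 x)"
      unfolding mem_Pset_Nil_iff by blast
    then obtain s xs where pre: "prefix c (f 1 s @ fstar f \<tau> (\<tau> 1 s) xs)"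
      by (cases x) auto
    have "c \<noteq> [False, False]"
    proof
      assume FF: "c = [False, False]"
      with pre table1_not_Nil[of s] have "prefix [False] (f 1 s)"
        by (cases "f 1 s") auto
      with table1_False_True obtain r where "f 1 s = False # True # r" by blast
      with pre FF show False by simp
    qed
    with c Pset_2_subset show "c \<in> {[False, True], [True, False], [True, True]}" by blast
  qed
  obtain s where "prefix [False] (f 1 s)"
    using first_bit_occurs[of 1 False] table1_not_Nil by auto
  with table1_False_True obtain r where "f 1 s = False # True # r" by blast
  then have "[False, True] \<in> Pset f \<tau> 2 1 []"
    unfolding mem_Pset_Nil_iff by (intro conjI exI[of _ "[s]"]) auto
  moreover have "[True, a] \<in> Pset f \<tau> 2 1 []" for a
    using two_bit_start_in_Pset[of 1 True a] table1_not_Nil by simp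
  ultimately show "{[False, True], [True, False], [True, True]} \<subseteq> Pset f \<tau> 2 1 []" by blast
qed

lemma Pset_table0: "Pset f \<tau> 2 0 [] = {[False, False], [False, True], [True, False], [True, True]}"
proof (rule antisym[OF Pset_2_subset])
  show "{[False, False], [False, True], [True, False], [True, True]} \<subseteq> Pset f \<tau> 2 0 []"
  proof (cases "\<exists>s. f 0 s = []")
    case True
    then obtain s where s: "f 0 s = []" by blast
    obtain s' where s': "f 0 s' \<noteq> []" using table0_not_all_Nil by blast
    with s have "prefix [False, False] (f 0 s')"
      using strict_prefix_codeword_extends_False_False[of 0 s s'] by (simp add: strict_prefix_def)
    then have "[False, False] \<in> Pset f \<tau> 2 0 []"
      unfolding mem_Pset_Nil_iff by (intro conjI exI[of _ "[s']"]) auto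
    moreover have "Pset f \<tau> 2 1 [] \<subseteq> Pset f \<tau> 2 0 []"
      using Pset_Nil_mono_empty_codeword[of f 0 s \<tau> 2] s empty_codeword_switches[OF s] by simp
    ultimately show ?thesis unfolding Pset_table1 by simp
  next
    case False
    then have "[a\<^sub>1, a\<^sub>2] \<in> Pset f \<tau> 2 0 []" for a\<^sub>1 a\<^sub>2
      using two_bit_start_in_Pset[of 0 a\<^sub>1 a\<^sub>2] by simp
    then show ?thesis by simp
  qed
qed

lemma Pbar_2_codeword_subset:
  assumes i: "i < 2" shows "Pbar f \<tau> 2 i (f i s) \<subseteq> {[False, False]}"
proof
  fix c assume "c \<in> Pbar f \<tau> 2 i (f i s)"
  then obtain x where c: "length c = 2" "x \<noteq> []" "prefix (f i s @ c) (fstar f \<tau> i x)"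
    and extends: "strict_prefix (f i s) (f i (hd x))"
    unfolding Pbar_def by blast
  obtain s' xs where x: "x = s' # xs" using c(2) by (cases x) auto
  have "prefix (f i s @ [False, False]) (f i s')"
    using strict_prefix_codeword_extends_False_False[OF i] extends x by simp
  then have "prefix (f i s @ [False, False]) (fstar f \<tau> i x)" using x by simp
  from prefix_length_prefix[OF c(3) this] c(1) have "prefix c [False, False]" by simp
  with c(1) have "c = [False, False]" by (auto simp: prefix_Cons)
  then show "c \<in> {[False, False]}" by simp
qed

lemma two_bit_delay_dec: "two_bit_delay_dec 2 f \<tau>"
  unfolding two_bit_delay_dec_def
proof (intro conjI allI impI)
  fix i s assume i: "i < (2::nat)"
  show "Pset f \<tau> 2 (\<tau> i s) [] \<inter> Pbar f \<tau> 2 i (f i s) = {}"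
  proof (cases "Pbar f \<tau> 2 i (f i s) = {}")
    case False
    then have "\<exists>s'. strict_prefix (f i s) (f i s')" unfolding Pbar_def by blast
    then have "\<tau> i s = 1" using tau_eq[OF i] by simp
    then show ?thesis using Pbar_2_codeword_subset[OF i, of s] Pset_table1 by auto
  qed simp
next
  fix i s s' assume "i < (2::nat)" and "s \<noteq> s' \<and> f i s = f i s'"
  then show "Pset f \<tau> 2 (\<tau> i s) [] \<inter> Pset f \<tau> 2 (\<tau> i s') [] = {}"
    using inj_table by (meson injD)
qed

lemma table1_returns: "\<exists>s. \<tau> 1 s = 0"
proof -
  obtain s where "\<forall>w\<in>range (f 1). prefix (f 1 s) w \<longrightarrow> f 1 s = w"
    using prefix_order.finite_has_maximal[of "range (f 1)"] by auto
  then have "\<nexists>s'. strict_prefix (f 1 s) (f 1 s')" by (auto simp: strict_prefix_def)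
  then show ?thesis using tau_eq[of 1 s] by auto
qed

end

theorem lemma11:
  fixes \<mu> :: "'a::finite \<Rightarrow> real"
    and m :: nat and f :: "nat \<Rightarrow> 'a \<Rightarrow> bool list" and \<tau> :: "nat \<Rightarrow> 'a \<Rightarrow> nat"
  assumes "card (UNIV :: 'a set) \<ge> 2"
    and "\<forall>s. 0 < \<mu> s \<and> \<mu> s \<le> 1"
    and "(\<Sum>s\<in>UNIV. \<mu> s) = 1"
    and "in_AIFV m f \<tau>"
  shows "in_F4 \<mu> m f \<tau>"
proof -
  have m: "m = 2" using assms(4) unfolding in_AIFV_def by blast
  interpret aifv_code f \<tau>
    using assms(1,4) m by unfold_locales simp_all
  obtain s\<^sub>0 where "\<tau> 1 s\<^sub>0 = 0" using table1_returns by blast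
  then have "regular \<mu> 2 \<tau>"
    using assms(2,3) tau_less_2 by (intro regular_two_tables_if_return) auto
  then show ?thesis
    unfolding in_F4_def m
    using code_tuple two_bit_delay_dec Pset_table0 Pset_table1 by blast
qed

end
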